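(* If $m$ is a positive even integer and $n$ is a positive odd integer, then \[ \sum_{k=1}^\infty\frac{\zeta(2k)}{k(2k+m)(2k+n)} = -\frac{m+n}{(mn)^2}+\frac{\ln(2\pi)}{mn}-\frac{i^m(m-1)!}{m-n}\frac{\zeta(m+1)}{(2\pi)^m} +\frac{1}{m-n}\left((m-1)!\sum_{j=1}^{m/2}\frac{(-1)^j\zeta(2j+1)}{(m-2j)!(2\pi)^{2j}}-(n-1)!\sum_{j=1}^{(n-1)/2}\frac{(-1)^j\zeta(2j+1)}{(n-2j)!(2\pi)^{2j}}\right). \]
   Context: $\zeta$ is the Riemann zeta function, $i$ is the imaginary unit, and empty sums equal $0$. *)

theory Defs
  imports "HOL-Analysis.Analysis"
begin

text \<open>Riemann zeta function, only needed at real arguments s > 1, where it is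
  given by its Dirichlet series sum over n >= 1 of n powr (-s).\<close>
definition zeta :: "real \<Rightarrow> real" where
  "zeta s = (\<Sum>n. 1 / (real (Suc n)) powr s)"

end

theory Submission
  imports Defs "HOL-Real_Asymp.Real_Asymp"
begin

text \<open>
  By partial fractions the series is \<open>(F n - F m) / (m - n)\<close> with
  \<open>F a = \<Sum>k\<ge>1. \<zeta>(2k) / (k (2k + a))\<close>. Taking logarithms in the product formula for the sine
  and summing over the factors gives \<open>\<Sum>k\<ge>1. \<zeta>(2k) t\<^sup>2\<^sup>k / k = ln (\<pi> t) - ln (sin (\<pi> t))\<close>
  on \<open>(0, 1)\<close>; integrating against \<open>t\<^sup>a\<^sup>-\<^sup>1\<close> yields
  \<open>F a = ln (2\<pi>) / a - 1 / a\<^sup>2 - \<integral>\<^sub>0\<^sup>1 t\<^sup>a\<^sup>-\<^sup>1 ln (2 sin (\<pi> t)) dt\<close>.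
  The Fourier series \<open>ln (2 sin (\<pi> t)) = - \<Sum>k\<ge>1. cos (2\<pi>kt) / k\<close>, justified by Abel
  summation and dominated convergence, together with the elementary integrals of
  \<open>t\<^sup>b cos (2\<pi>kt)\<close> turns the last integral into a finite combination of values of \<open>\<zeta>\<close> at odd
  integers. For even \<open>m\<close> the term \<open>j = m/2\<close> of the first finite sum is exactly the
  \<open>\<i>\<^sup>m \<zeta>(m + 1)\<close> term of the statement.
\<close>

section \<open>Series expansions\<close>

lemma sums_swap_nonneg:
  fixes f :: "nat \<Rightarrow> nat \<Rightarrow> real"
  assumes nonneg: "\<And>j k. 0 \<le> f j k"
    and rows: "\<And>j. (\<lambda>k. f j k) sums g j" and "g sums G"
    and cols: "\<And>k. (\<lambda>j. f j k) sums h k"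
  shows "h sums G"
proof -
  have rows': "((\<lambda>k. f j k) has_sum g j) UNIV" for j
    by (rule sums_nonneg_imp_has_sum[OF rows nonneg])
  have "0 \<le> g j" for j
    by (rule sums_le[OF _ sums_zero rows]) (simp add: nonneg)
  with \<open>g sums G\<close> have G: "(g has_sum G) UNIV"
    by (rule sums_nonneg_imp_has_sum)
  have cols': "((\<lambda>j. f j k) has_sum h k) UNIV" for k
    by (rule sums_nonneg_imp_has_sum[OF cols nonneg])
  have "(\<lambda>(j, k). f j k) summable_on UNIV \<times> UNIV"
    by (rule summable_on_SigmaI[where g = g]) (use rows' G nonneg in \<open>auto simp: summable_on_def\<close>)
  hence "((\<lambda>(j, k). f j k) has_sum G) (UNIV \<times> UNIV)"
    by (intro has_sum_SigmaI[where g = g]) (use rows' G in auto)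
  hence "((\<lambda>(k, j). f j k) has_sum G) (UNIV \<times> UNIV)"
    by (subst (asm) has_sum_swap) simp
  hence "(h has_sum G) UNIV"
    by (rule has_sum_SigmaD) (use cols' in auto)
  thus ?thesis
    by (rule has_sum_imp_sums)
qed

lemma zeta_nat_sums:
  assumes "2 \<le> q"
  shows "(\<lambda>n. 1 / real (Suc n) ^ q) sums zeta (real q)"
proof -
  have "summable (\<lambda>n. inverse (real n ^ q))"
    by (rule inverse_power_summable) (use assms in auto)
  hence "summable (\<lambda>n. inverse (real (Suc n) ^ q))"
    by (subst summable_Suc_iff)
  hence "summable (\<lambda>n. 1 / real (Suc n) ^ q)"
    by (simp add: divide_inverse)
  moreover have "zeta (real q) = (\<Sum>n. 1 / real (Suc n) ^ q)"
    unfolding zeta_def by (simp add: powr_realpow)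
  ultimately show ?thesis
    by (simp add: sums_iff)
qed

lemma zeta_nat_nonneg: "2 \<le> q \<Longrightarrow> 0 \<le> zeta (real q)"
  by (rule sums_le[OF _ sums_zero zeta_nat_sums]) auto

lemma zeta_nat_antimono:
  assumes "2 \<le> p" "p \<le> q"
  shows "zeta (real q) \<le> zeta (real p)"
proof (rule sums_le[OF _ zeta_nat_sums zeta_nat_sums])
  show "1 / real (Suc n) ^ q \<le> 1 / real (Suc n) ^ p" for n
    by (intro divide_left_mono power_increasing) (use assms in auto)
qed (use assms in auto)

lemma minus_ln_norm_one_minus_sums:
  fixes z :: complex
  assumes "norm z < 1"
  shows "(\<lambda>k. Re (z ^ Suc k) / real (Suc k)) sums - ln (norm (1 - z))"
proof -
  have "(\<lambda>k. - ((- (- z)) ^ k) / of_nat k) sums ln (1 + (- z))"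
    by (rule Ln_series') (use assms in simp)
  hence "(\<lambda>k. - Re (- ((- (- z)) ^ k) / of_nat k)) sums - Re (ln (1 + (- z)))"
    by (intro sums_minus sums_Re)
  hence "(\<lambda>k. Re (z ^ k) / real k) sums - Re (ln (1 - z))"
    by (simp add: Re_divide_of_nat)
  moreover have "1 - z \<noteq> 0"
    using assms by auto
  ultimately have "(\<lambda>k. Re (z ^ k) / real k) sums - ln (norm (1 - z))"
    by simp
  thus ?thesis
    by (subst sums_Suc_iff) simp
qed

lemma minus_ln_one_minus_sums:
  fixes u :: real
  assumes "\<bar>u\<bar> < 1"
  shows "(\<lambda>k. u ^ Suc k / real (Suc k)) sums - ln (1 - u)"
proof -
  have "norm (1 - complex_of_real u) = \<bar>1 - u\<bar>"
    by (metis norm_of_real of_real_1 of_real_diff)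
  hence "norm (1 - complex_of_real u) = 1 - u"
    using assms by simp
  thus ?thesis
    using minus_ln_norm_one_minus_sums[of "complex_of_real u"] assms by (simp flip: of_real_power)
qed

lemma minus_ln_norm_one_minus_cis_sums:
  fixes r x :: real
  assumes "\<bar>r\<bar> < 1"
  shows "(\<lambda>k. r ^ Suc k * cos (real (Suc k) * x) / real (Suc k))
           sums - ln (norm (1 - complex_of_real r * cis x))"
proof -
  have "Re ((complex_of_real r * cis x) ^ n) = r ^ n * cos (real n * x)" for n
    by (simp add: power_mult_distrib Complex.DeMoivre flip: of_real_power)
  with minus_ln_norm_one_minus_sums[of "complex_of_real r * cis x"] assms show ?thesis
    by (simp only: norm_mult norm_of_real norm_cis mult_1_right)
qed

lemma abel_limit_abs_summable:
  fixes a r :: "nat \<Rightarrow> real"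
  assumes "summable (\<lambda>k. \<bar>a k\<bar>)" and "r \<longlonglongrightarrow> 1" and "\<And>N. r N \<in> {0..1}"
  shows "(\<lambda>N. \<Sum>k. r N ^ Suc k * a k) \<longlonglongrightarrow> (\<Sum>k. a k)"
proof -
  define S where "S x = (\<Sum>k. x ^ Suc k * a k)" for x :: real
  have "uniform_limit {0..1} (\<lambda>n x. \<Sum>k<n. x ^ Suc k * a k) S sequentially"
    unfolding S_def
  proof (rule Weierstrass_m_test[OF _ assms(1)])
    fix k and x :: real
    assume "x \<in> {0..1}"
    hence "\<bar>x ^ Suc k\<bar> \<le> 1"
      by (simp add: power_le_one del: power_Suc)
    thus "norm (x ^ Suc k * a k) \<le> \<bar>a k\<bar>"
      by (simp add: abs_mult mult_left_le_one_le)
  qed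
  hence "continuous_on {0..1} S"
    by (rule uniform_limit_theorem[rotated]) (auto intro!: always_eventually continuous_intros)
  hence "(\<lambda>N. S (r N)) \<longlonglongrightarrow> S 1"
    by (rule continuous_on_tendsto_compose[OF _ assms(2)]) (use assms(3) in auto)
  thus ?thesis
    by (simp add: S_def)
qed

lemma power2_div_power2_less_1:
  fixes t :: real
  assumes "\<bar>t\<bar> < 1" "1 \<le> k"
  shows "t\<^sup>2 / real k ^ 2 < 1"
proof -
  have "t\<^sup>2 < 1"
    using assms by (simp add: abs_square_less_1)
  also have "1 \<le> real k ^ 2"
    using assms by simp
  finally show ?thesis
    by (simp add: divide_less_eq)
qed

lemma ln_sin_product_sums:
  fixes t :: real
  assumes t: "0 < t" "t < 1"
  shows "(\<lambda>j. - ln (1 - t\<^sup>2 / real (Suc j) ^ 2)) sums (ln (pi * t) - ln (sin (pi * t)))"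
proof -
  have factor_pos: "0 < 1 - t\<^sup>2 / real k ^ 2" if "1 \<le> k" for k
    using power2_div_power2_less_1[OF _ that] t by simp
  have sin_pos: "0 < sin (pi * t)"
    using t by (intro sin_gt_zero) auto
  have "(\<lambda>n. \<Prod>k=1..n. 1 - t\<^sup>2 / real k ^ 2) \<longlonglongrightarrow> sin (pi * t) / (pi * t)"
    by (rule sin_product_formula_real') (use t in auto)
  hence "(\<lambda>n. ln (\<Prod>k=1..n. 1 - t\<^sup>2 / real k ^ 2)) \<longlonglongrightarrow> ln (sin (pi * t) / (pi * t))"
    by (rule tendsto_ln) (use sin_pos t in simp)
  moreover have "ln (\<Prod>k=1..n. 1 - t\<^sup>2 / real k ^ 2) = (\<Sum>j<n. ln (1 - t\<^sup>2 / real (Suc j) ^ 2))" for n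
  proof -
    have "ln (\<Prod>k=1..n. 1 - t\<^sup>2 / real k ^ 2) = (\<Sum>k=1..n. ln (1 - t\<^sup>2 / real k ^ 2))"
    proof (rule ln_prod)
      show "1 - t\<^sup>2 / real k ^ 2 \<noteq> 0" if "k \<in> {1..n}" for k
        using factor_pos[of k] that by fastforce
    qed simp
    thus ?thesis
      by (simp add: sum.atLeast1_atMost_eq)
  qed
  ultimately have "(\<lambda>j. ln (1 - t\<^sup>2 / real (Suc j) ^ 2)) sums ln (sin (pi * t) / (pi * t))"
    by (simp add: sums_def)
  hence "(\<lambda>j. - ln (1 - t\<^sup>2 / real (Suc j) ^ 2)) sums - ln (sin (pi * t) / (pi * t))"
    by (rule sums_minus)
  thus ?thesis
    using sin_pos t by (simp add: ln_div)
qed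

text \<open>Expand each factor of the sine product with the logarithmic series and sum by columns.\<close>
lemma ln_pi_div_sin_sums:
  fixes t :: real
  assumes t: "0 < t" "t < 1"
  shows "(\<lambda>k. zeta (2 * real (Suc k)) * t ^ (2 * Suc k) / real (Suc k))
           sums (ln (pi * t) - ln (sin (pi * t)))"
proof (rule sums_swap_nonneg)
  define u where "u j = t\<^sup>2 / real (Suc j) ^ 2" for j
  have u: "0 \<le> u j" "u j < 1" for j
    unfolding u_def using power2_div_power2_less_1[of t "Suc j"] t by simp_all
  show "0 \<le> u j ^ Suc k / real (Suc k)" for j k
    using u by simp
  show "(\<lambda>k. u j ^ Suc k / real (Suc k)) sums - ln (1 - u j)" for j
    by (rule minus_ln_one_minus_sums) (use u in auto)
  show "(\<lambda>j. - ln (1 - u j)) sums (ln (pi * t) - ln (sin (pi * t)))"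
    unfolding u_def by (rule ln_sin_product_sums[OF t])
  show "(\<lambda>j. u j ^ Suc k / real (Suc k)) sums (zeta (2 * real (Suc k)) * t ^ (2 * Suc k) / real (Suc k))" for k
  proof -
    have "(\<lambda>j. t ^ (2 * Suc k) / real (Suc k) * (1 / real (Suc j) ^ (2 * Suc k)))
            sums (t ^ (2 * Suc k) / real (Suc k) * zeta (real (2 * Suc k)))"
      by (intro sums_mult zeta_nat_sums) simp
    moreover have "u j ^ Suc k / real (Suc k) = t ^ (2 * Suc k) / real (Suc k) * (1 / real (Suc j) ^ (2 * Suc k))" for j
      unfolding u_def power_divide power_mult by simp
    ultimately show ?thesis
      by (simp add: mult_ac)
  qed
qed

section \<open>Term-by-term integration\<close>

lemma has_integral_real_derivative:
  fixes F f :: "real \<Rightarrow> real"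
  assumes "a \<le> b" "\<And>x. (F has_real_derivative f x) (at x)"
  shows "(f has_integral F b - F a) {a..b}"
  using assms
  by (intro fundamental_theorem_of_calculus)
     (auto simp flip: has_real_derivative_iff_has_vector_derivative intro: has_field_derivative_at_within)

lemma has_integral_power_01: "((\<lambda>t::real. t ^ p) has_integral 1 / real (Suc p)) {0..1}"
proof -
  have "((\<lambda>t. t ^ Suc p / real (Suc p)) has_real_derivative x ^ p) (at x)" for x :: real
    using DERIV_cdivide[OF DERIV_pow[of "Suc p" x], of "real (Suc p)"] by (simp del: of_nat_Suc)
  hence "((\<lambda>t::real. t ^ p) has_integral 1 ^ Suc p / real (Suc p) - 0 ^ Suc p / real (Suc p)) {0..1}"
    by (intro has_integral_real_derivative) auto
  thus ?thesis
    by simp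
qed

lemma has_integral_power_ln_01:
  "((\<lambda>t::real. t ^ b * ln t) has_integral - 1 / real (Suc b) ^ 2) {0..1}"
proof -
  define c where "c = real (Suc b)"
  have "c \<noteq> 0"
    by (simp add: c_def)
  define F where "F t = t ^ Suc b * (ln t / c - 1 / c\<^sup>2)" for t :: real
  have "continuous_on {0..1} F"
  proof (rule continuous_on_IccI)
    have "((\<lambda>t::real. t * ln t) \<longlongrightarrow> 0) (at_right 0)"
      by real_asymp
    hence "((\<lambda>t. t ^ b * (t * ln t) / c - t ^ Suc b / c\<^sup>2) \<longlongrightarrow> 0 ^ b * 0 / c - 0 ^ Suc b / c\<^sup>2) (at_right 0)"
      using \<open>c \<noteq> 0\<close> by (intro tendsto_intros) auto
    thus "(F \<longlongrightarrow> F 0) (at_right 0)"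
      by (simp add: F_def[abs_def] algebra_simps diff_divide_distrib)
    show "(F \<longlongrightarrow> F 1) (at_left 1)"
      unfolding F_def using \<open>c \<noteq> 0\<close> by (intro tendsto_intros) auto
    show "F \<midarrow>x\<rightarrow> F x" if "0 < x" "x < 1" for x
      unfolding F_def using that \<open>c \<noteq> 0\<close> by (intro tendsto_intros) auto
  qed simp
  moreover have "(F has_real_derivative x ^ b * ln x) (at x)" if "x \<in> {0<..<1}" for x
  proof -
    have "((\<lambda>t. t ^ Suc b) has_real_derivative c * x ^ b) (at x)"
      using DERIV_pow[of "Suc b" x] by (simp add: c_def)
    moreover have "((\<lambda>t. ln t / c - 1 / c\<^sup>2) has_real_derivative inverse x / c) (at x)"
      using that \<open>c \<noteq> 0\<close> by (auto intro!: derivative_eq_intros simp: field_simps)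
    ultimately have "(F has_real_derivative c * x ^ b * (ln x / c - 1 / c\<^sup>2) + inverse x / c * x ^ Suc b) (at x)"
      unfolding F_def by (rule DERIV_mult)
    moreover have "c * x ^ b * (ln x / c - 1 / c\<^sup>2) + inverse x / c * x ^ Suc b = x ^ b * ln x"
      using that by (simp add: c_def field_simps power2_eq_square del: of_nat_Suc)
    ultimately show ?thesis
      by simp
  qed
  ultimately have "((\<lambda>t::real. t ^ b * ln t) has_integral F 1 - F 0) {0..1}"
    by (intro fundamental_theorem_of_calculus_interior)
       (auto simp flip: has_real_derivative_iff_has_vector_derivative)
  thus ?thesis
    by (simp add: F_def c_def)
qed

lemma sums_integral_nonneg:
  fixes u :: "nat \<Rightarrow> 'a::euclidean_space \<Rightarrow> real"
  assumes int: "\<And>k. (u k has_integral c k) S"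
    and nonneg: "\<And>k x. x \<in> S \<Longrightarrow> 0 \<le> u k x"
    and sums: "\<And>x. x \<in> S \<Longrightarrow> (\<lambda>k. u k x) sums g x"
    and "summable c"
  shows "g integrable_on S" "c sums integral S g"
proof -
  define f where "f N x = (\<Sum>k<N. u k x)" for N x
  have f_int: "(f N has_integral (\<Sum>k<N. c k)) S" for N
    unfolding f_def by (intro has_integral_sum int) auto
  hence integral_f: "(\<lambda>N. integral S (f N)) = (\<lambda>N. \<Sum>k<N. c k)"
    by (auto intro: integral_unique)
  have f_integrable: "f N integrable_on S" for N
    using f_int by blast
  have f_mono: "f N x \<le> f (Suc N) x" if "x \<in> S" for N x
    unfolding f_def using nonneg[OF that] by simp
  have f_lim: "(\<lambda>N. f N x) \<longlonglongrightarrow> g x" if "x \<in> S" for x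
    using sums[OF that] by (simp add: f_def sums_def)
  have "bounded (range (\<lambda>N. integral S (f N)))"
    unfolding integral_f using summable_LIMSEQ[OF \<open>summable c\<close>] by (rule convergent_imp_bounded)
  note convergence = monotone_convergence_increasing[OF f_integrable f_mono f_lim this]
  show "g integrable_on S"
    using convergence by blast
  show "c sums integral S g"
    using convergence by (simp add: integral_f sums_def)
qed

lemma sums_integral_dominated:
  fixes u :: "nat \<Rightarrow> 'a::euclidean_space \<Rightarrow> real"
  assumes int: "\<And>k. (u k has_integral c k) (cbox a b)"
    and bound: "\<And>k x. x \<in> cbox a b \<Longrightarrow> \<bar>u k x\<bar> \<le> B k" and "summable B"
    and sums: "\<And>x. x \<in> cbox a b \<Longrightarrow> (\<lambda>k. u k x) sums g x"
  shows "g integrable_on cbox a b" "c sums integral (cbox a b) g"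
proof -
  define f where "f N x = (\<Sum>k<N. u k x)" for N x
  have f_int: "(f N has_integral (\<Sum>k<N. c k)) (cbox a b)" for N
    unfolding f_def by (intro has_integral_sum int) auto
  hence integral_f: "(\<lambda>N. integral (cbox a b) (f N)) = (\<lambda>N. \<Sum>k<N. c k)"
    by (auto intro: integral_unique)
  have f_bound: "norm (f N x) \<le> suminf B" if "x \<in> cbox a b" for N x
  proof -
    have "norm (f N x) \<le> (\<Sum>k<N. B k)"
      unfolding f_def using bound[OF that] by (intro sum_norm_le) simp
    also have "\<dots> \<le> suminf B"
    proof (rule sum_le_suminf[OF \<open>summable B\<close>])
      show "0 \<le> B k" for k
        using bound[OF that, of k] by linarith
    qed auto
    finally show ?thesis .
  qed
  have f_lim: "(\<lambda>N. f N x) \<longlonglongrightarrow> g x" if "x \<in> cbox a b" for x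
    using sums[OF that] by (simp add: f_def sums_def)
  have f_integrable: "f N integrable_on cbox a b" for N
    using f_int by blast
  note convergence = dominated_convergence[OF f_integrable integrable_const f_bound f_lim]
  show "g integrable_on cbox a b"
    by (rule convergence(1))
  show "c sums integral (cbox a b) g"
    using convergence(2) by (simp add: integral_f sums_def)
qed

lemma zeta_even_series_integral:
  fixes b :: nat
  defines "g \<equiv> \<lambda>t::real. t ^ b * (ln (pi * t) - ln (sin (pi * t)))"
  shows "g integrable_on {0..1}"
    and "(\<lambda>k. zeta (2 * real (Suc k)) / (real (Suc k) * (2 * real (Suc k) + real (Suc b))))
           sums integral {0..1} g"
proof -
  define c where "c k = zeta (2 * real (Suc k)) / (real (Suc k) * (2 * real (Suc k) + real (Suc b)))" for k
  have zeta_even: "zeta (2 * real (Suc k)) = zeta (real (2 * Suc k))" for k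
    by simp
  have "summable c"
  proof (rule summable_comparison_test)
    show "summable (\<lambda>k. zeta 2 * (1 / real (Suc k) ^ 2))"
      using zeta_nat_sums[of 2] by (intro summable_mult sums_summable) auto
    have "norm (c k) \<le> zeta (real (2 * Suc k)) / (real (Suc k) * real (Suc k))" for k
      unfolding c_def zeta_even using zeta_nat_nonneg[of "2 * Suc k"]
      by (simp add: frac_le mult_left_mono)
    also have "\<dots> k \<le> zeta 2 * (1 / real (Suc k) ^ 2)" for k
      using zeta_nat_antimono[of 2 "2 * Suc k"] by (simp add: power2_eq_square divide_right_mono)
    finally show "\<exists>N. \<forall>k\<ge>N. norm (c k) \<le> zeta 2 * (1 / real (Suc k) ^ 2)"
      by blast
  qed
  define u where "u k t = zeta (2 * real (Suc k)) / real (Suc k) * t ^ (2 * Suc k + b)" for k and t :: real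
  have u_int: "(u k has_integral c k) {0<..<1}" for k
  proof -
    have "(u k has_integral zeta (2 * real (Suc k)) / real (Suc k) * (1 / real (Suc (2 * Suc k + b)))) {0..1}"
      unfolding u_def by (intro has_integral_mult_right has_integral_power_01)
    thus ?thesis
      by (simp add: has_integral_Icc_iff_Ioo c_def field_simps)
  qed
  have u_nonneg: "0 \<le> u k t" if "t \<in> {0<..<1}" for k t
    using that zeta_nat_nonneg[of "2 * Suc k"] by (simp add: u_def)
  have u_sums: "(\<lambda>k. u k t) sums g t" if "t \<in> {0<..<1}" for t
  proof -
    have "(\<lambda>k. t ^ b * (zeta (2 * real (Suc k)) * t ^ (2 * Suc k) / real (Suc k))) sums g t"
      unfolding g_def using that by (intro sums_mult ln_pi_div_sin_sums) auto
    thus ?thesis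
      by (simp add: u_def power_add mult_ac)
  qed
  note sums_integral_nonneg[OF u_int u_nonneg u_sums \<open>summable c\<close>]
  thus "g integrable_on {0..1}" "c sums integral {0..1} g"
    by (simp_all add: integrable_on_open_interval_real integral_open_interval_real)
qed

lemma integrable_ln_sin_pi: "(\<lambda>t. ln (sin (pi * t))) integrable_on {0..1}"
proof -
  have "(\<lambda>t. t ^ 0 * (ln (pi * t) - ln (sin (pi * t)))) integrable_on {0..1}"
    by (rule zeta_even_series_integral(1))
  moreover have "(\<lambda>t::real. t ^ 0 * ln t) integrable_on {0..1}"
    using has_integral_power_ln_01[of 0] by blast
  ultimately have "(\<lambda>t. ln pi + t ^ 0 * ln t - t ^ 0 * (ln (pi * t) - ln (sin (pi * t)))) integrable_on {0..1}"
    by (intro integrable_diff integrable_add integrable_const_ivl)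
  hence "(\<lambda>t. ln pi + t ^ 0 * ln t - t ^ 0 * (ln (pi * t) - ln (sin (pi * t)))) integrable_on {0<..<1}"
    by (simp only: integrable_on_open_interval_real)
  hence "(\<lambda>t. ln (sin (pi * t))) integrable_on {0<..<1}"
    by (rule integrable_eq) (auto simp: ln_mult)
  thus ?thesis
    by (simp add: integrable_on_open_interval_real)
qed

section \<open>Moments of the cosine\<close>

definition cos_moment :: "nat \<Rightarrow> real \<Rightarrow> real" where
  "cos_moment b w = (\<Sum>j = 1..b div 2. (-1) ^ (j - 1) * fact b / (fact (b + 1 - 2 * j) * w ^ (2 * j)))"

lemma cos_moment_add_2:
  "cos_moment (c + 2) w = real (c + 2) / w\<^sup>2 - real (c + 2) * real (c + 1) / w\<^sup>2 * cos_moment c w"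
proof -
  define T where "T b j = (-1) ^ (j - 1) * fact b / (fact (b + 1 - 2 * j) * w ^ (2 * j))" for b j :: nat
  have cos_moment_T: "cos_moment b w = sum (T b) {1..b div 2}" for b
    by (simp add: cos_moment_def T_def)
  have "(c + 2) div 2 = Suc (c div 2)"
    by simp
  hence "cos_moment (c + 2) w = T (c + 2) 1 + (\<Sum>j = Suc 1..Suc (c div 2). T (c + 2) j)"
    unfolding cos_moment_T by (simp only: sum.atLeast_Suc_atMost[of 1])
  also have "\<dots> = T (c + 2) 1 + (\<Sum>j = 1..c div 2. T (c + 2) (Suc j))"
    by (simp only: sum.shift_bounds_cl_Suc_ivl)
  also have "T (c + 2) 1 = real (c + 2) / w\<^sup>2"
    by (simp add: T_def fact_Suc numeral_2_eq_2)
  also have "(\<Sum>j = 1..c div 2. T (c + 2) (Suc j)) =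
             (\<Sum>j = 1..c div 2. - (real (c + 2) * real (c + 1) / w\<^sup>2) * T c j)"
  proof (rule sum.cong[OF refl])
    fix j assume "j \<in> {1..c div 2}"
    then obtain i where i: "j = Suc i" and "2 * j \<le> c"
      by (cases j) auto
    hence "c + 2 + 1 - 2 * Suc j = c + 1 - 2 * j"
      by simp
    moreover have "(fact (c + 2) :: real) = real (c + 2) * real (c + 1) * fact c"
      by (simp add: fact_Suc numeral_2_eq_2 algebra_simps)
    moreover have "w ^ (2 * Suc j) = w\<^sup>2 * w ^ (2 * j)"
      by (simp add: power2_eq_square)
    ultimately show "T (c + 2) (Suc j) = - (real (c + 2) * real (c + 1) / w\<^sup>2) * T c j"
      unfolding T_def i by (simp add: divide_simps power2_eq_square)
  qed
  also have "\<dots> = - (real (c + 2) * real (c + 1) / w\<^sup>2) * cos_moment c w"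
    by (simp only: cos_moment_T sum_distrib_left)
  finally show ?thesis
    by simp
qed

text \<open>The antiderivative obtained by integrating \<open>t\<^sup>c\<^sup>+\<^sup>2 cos (w t)\<close> by parts twice.\<close>
lemma has_real_derivative_power_sin_cos:
  fixes w x :: real
  assumes "w \<noteq> 0"
  shows "((\<lambda>t. t ^ (c + 2) * sin (w * t) / w + real (c + 2) * (t ^ (c + 1) * cos (w * t)) / w\<^sup>2)
           has_real_derivative x ^ (c + 2) * cos (w * x) + real (c + 2) * real (c + 1) / w\<^sup>2 * (x ^ c * cos (w * x)))
           (at x)"
proof -
  have "((\<lambda>t. t ^ (c + 2)) has_real_derivative real (c + 2) * x ^ (c + 1)) (at x)"
    using DERIV_pow[of "c + 2" x] by simp
  moreover have "((\<lambda>t. t ^ (c + 1)) has_real_derivative real (c + 1) * x ^ c) (at x)"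
    using DERIV_pow[of "c + 1" x] by simp
  moreover have "((\<lambda>t. sin (w * t)) has_real_derivative cos (w * x) * w) (at x)"
    by (auto intro!: derivative_eq_intros)
  moreover have "((\<lambda>t. cos (w * t)) has_real_derivative - sin (w * x) * w) (at x)"
    by (auto intro!: derivative_eq_intros)
  ultimately have "((\<lambda>t. t ^ (c + 2) * sin (w * t) / w + real (c + 2) * (t ^ (c + 1) * cos (w * t)) / w\<^sup>2)
      has_real_derivative
        (real (c + 2) * x ^ (c + 1) * sin (w * x) + cos (w * x) * w * x ^ (c + 2)) / w
        + real (c + 2) * (real (c + 1) * x ^ c * cos (w * x) + - sin (w * x) * w * x ^ (c + 1)) / w\<^sup>2) (at x)"
    by (intro DERIV_add DERIV_cdivide DERIV_mult DERIV_cmult)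
  moreover have "(real (c + 2) * x ^ (c + 1) * sin (w * x) + cos (w * x) * w * x ^ (c + 2)) / w
      + real (c + 2) * (real (c + 1) * x ^ c * cos (w * x) + - sin (w * x) * w * x ^ (c + 1)) / w\<^sup>2
      = x ^ (c + 2) * cos (w * x) + real (c + 2) * real (c + 1) / w\<^sup>2 * (x ^ c * cos (w * x))"
    using assms by (simp add: field_simps power2_eq_square)
  ultimately show ?thesis
    by simp
qed

lemma has_integral_cos_moment:
  assumes "w \<noteq> 0" "sin w = 0" "cos w = 1"
  shows "((\<lambda>t. t ^ b * cos (w * t)) has_integral cos_moment b w) {0..1}"
proof (induction b rule: nat_induct2)
  case 0
  have "((\<lambda>t. t ^ 0 * cos (w * t)) has_integral sin (w * 1) / w - sin (w * 0) / w) {0..1}"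
    using \<open>w \<noteq> 0\<close> by (intro has_integral_real_derivative) (auto intro!: derivative_eq_intros)
  thus ?case
    using assms by (simp add: cos_moment_def)
next
  case 1
  define F where "F t = t * sin (w * t) / w + cos (w * t) / w\<^sup>2" for t
  have "((\<lambda>t. t ^ 1 * cos (w * t)) has_integral F 1 - F 0) {0..1}"
    unfolding F_def using \<open>w \<noteq> 0\<close>
    by (intro has_integral_real_derivative) (auto intro!: derivative_eq_intros simp: field_simps power2_eq_square)
  thus ?case
    using assms by (simp add: F_def cos_moment_def)
next
  case (step c)
  define F where "F t = t ^ (c + 2) * sin (w * t) / w + real (c + 2) * (t ^ (c + 1) * cos (w * t)) / w\<^sup>2" for t
  have "(F has_real_derivative
          x ^ (c + 2) * cos (w * x) + real (c + 2) * real (c + 1) / w\<^sup>2 * (x ^ c * cos (w * x))) (at x)" for x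
    unfolding F_def using \<open>w \<noteq> 0\<close> by (rule has_real_derivative_power_sin_cos)
  hence "((\<lambda>t. t ^ (c + 2) * cos (w * t) + real (c + 2) * real (c + 1) / w\<^sup>2 * (t ^ c * cos (w * t)))
          has_integral F 1 - F 0) {0..1}" (is "(?f has_integral _) _")
    by (intro has_integral_real_derivative) auto
  hence "((\<lambda>t. ?f t - real (c + 2) * real (c + 1) / w\<^sup>2 * (t ^ c * cos (w * t))) has_integral
           F 1 - F 0 - real (c + 2) * real (c + 1) / w\<^sup>2 * cos_moment c w) {0..1}"
    by (intro has_integral_diff has_integral_mult_right step.IH)
  moreover have "F 1 - F 0 = real (c + 2) / w\<^sup>2"
    using assms by (simp add: F_def)
  ultimately show ?case
    using cos_moment_add_2[of c w] by (simp add: mult_ac)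
qed

lemma cos_moment_series:
  fixes b :: nat
  defines "a \<equiv> \<lambda>j. (-1) ^ (j - 1) * fact b / (fact (b + 1 - 2 * j) * (2 * pi) ^ (2 * j))"
  shows "(\<lambda>k. cos_moment b (2 * pi * real (Suc k)) / real (Suc k))
           sums (\<Sum>j = 1..b div 2. a j * zeta (real (2 * j + 1)))"
    and "summable (\<lambda>k. \<bar>cos_moment b (2 * pi * real (Suc k)) / real (Suc k)\<bar>)"
proof -
  have expand: "cos_moment b (2 * pi * real (Suc k)) / real (Suc k) =
                  (\<Sum>j = 1..b div 2. a j * (1 / real (Suc k) ^ (2 * j + 1)))" for k
    unfolding cos_moment_def a_def sum_divide_distrib
    by (intro sum.cong refl) (simp add: power_mult_distrib)
  show "(\<lambda>k. cos_moment b (2 * pi * real (Suc k)) / real (Suc k))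
           sums (\<Sum>j = 1..b div 2. a j * zeta (real (2 * j + 1)))"
    unfolding expand by (intro sums_sum sums_mult zeta_nat_sums) auto
  show "summable (\<lambda>k. \<bar>cos_moment b (2 * pi * real (Suc k)) / real (Suc k)\<bar>)"
  proof (rule summable_comparison_test')
    show "summable (\<lambda>k. \<Sum>j = 1..b div 2. \<bar>a j\<bar> * (1 / real (Suc k) ^ (2 * j + 1)))"
      by (intro summable_sum summable_mult sums_summable[OF zeta_nat_sums]) auto
    show "norm \<bar>cos_moment b (2 * pi * real (Suc k)) / real (Suc k)\<bar> \<le>
            (\<Sum>j = 1..b div 2. \<bar>a j\<bar> * (1 / real (Suc k) ^ (2 * j + 1)))" for k
      unfolding expand real_norm_def abs_abs by (rule order_trans[OF sum_abs]) (simp add: abs_mult)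
  qed
qed

section \<open>The log-sine integral\<close>

text \<open>The Abel means of the Fourier series of \<open>ln (2 sin (\<pi> t))\<close>,
  cf. \<open>minus_ln_norm_one_minus_cis_sums\<close>.\<close>
definition abel_log_sine :: "real \<Rightarrow> real \<Rightarrow> real" where
  "abel_log_sine r t = ln (norm (1 - complex_of_real r * cis (2 * pi * t)))"

lemma norm_one_minus_cis_double_sq:
  "norm (1 - complex_of_real r * cis (2 * x)) ^ 2 = (1 - r) ^ 2 + 4 * r * sin x ^ 2"
proof -
  have "norm (1 - complex_of_real r * cis (2 * x)) ^ 2 = (1 - r * cos (2 * x)) ^ 2 + (r * sin (2 * x)) ^ 2"
    by (simp add: cmod_power2)
  also have "\<dots> = (1 - r) ^ 2 + 2 * r * (1 - cos (2 * x))"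
    using sin_cos_squared_add[of "2 * x"] by algebra
  also have "1 - cos (2 * x) = 2 * sin x ^ 2"
    by (simp add: cos_double_sin)
  finally show ?thesis
    by simp
qed

lemma abel_log_sine_moment_sums:
  assumes "0 \<le> r" "r < 1"
  shows "(\<lambda>t. t ^ b * abel_log_sine r t) integrable_on {0..1}"
    and "(\<lambda>k. r ^ Suc k * (cos_moment b (2 * pi * real (Suc k)) / real (Suc k)))
           sums - integral {0..1} (\<lambda>t. t ^ b * abel_log_sine r t)"
proof -
  define u where "u k t = r ^ Suc k / real (Suc k) * (t ^ b * cos (2 * pi * real (Suc k) * t))" for k t
  have u_int: "(u k has_integral r ^ Suc k / real (Suc k) * cos_moment b (2 * pi * real (Suc k))) (cbox 0 1)" for k
    unfolding u_def cbox_interval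
    using sin_2npi[of "Suc k"] cos_2npi[of "Suc k"]
    by (intro has_integral_mult_right has_integral_cos_moment) (auto simp: mult_ac)
  have u_bound: "\<bar>u k t\<bar> \<le> r ^ Suc k / real (Suc k)" if "t \<in> cbox 0 1" for k t
  proof -
    have "\<bar>t ^ b * cos (2 * pi * real (Suc k) * t)\<bar> \<le> 1"
      using that by (auto simp: abs_mult power_le_one intro!: mult_le_one)
    hence "r ^ Suc k / real (Suc k) * \<bar>t ^ b * cos (2 * pi * real (Suc k) * t)\<bar> \<le> r ^ Suc k / real (Suc k)"
      using assms by (intro mult_left_le) auto
    thus ?thesis
      using assms by (simp add: u_def abs_mult)
  qed
  have B_summable: "summable (\<lambda>k. r ^ Suc k / real (Suc k))"
    using minus_ln_one_minus_sums[of r] assms by (auto intro: sums_summable)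
  have u_sums: "(\<lambda>k. u k t) sums - (t ^ b * abel_log_sine r t)" if "t \<in> cbox 0 1" for t
    using sums_mult[OF minus_ln_norm_one_minus_cis_sums[of r "2 * pi * t"], of "t ^ b"] assms
    by (simp add: u_def abel_log_sine_def mult_ac)
  note sums_integral_dominated[OF u_int u_bound B_summable u_sums]
  thus "(\<lambda>t. t ^ b * abel_log_sine r t) integrable_on {0..1}"
    "(\<lambda>k. r ^ Suc k * (cos_moment b (2 * pi * real (Suc k)) / real (Suc k)))
       sums - integral {0..1} (\<lambda>t. t ^ b * abel_log_sine r t)"
    by (simp_all add: cbox_interval integrable_neg_iff)
qed

lemma abel_log_sine_tendsto:
  assumes "0 < t" "t < 1" and "(r \<longlongrightarrow> 1) F"
  shows "((\<lambda>x. abel_log_sine (r x) t) \<longlongrightarrow> ln (2 * sin (pi * t))) F"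
proof -
  have sin_pos: "0 < sin (pi * t)"
    using assms by (intro sin_gt_zero) auto
  have "norm (1 - complex_of_real 1 * cis (2 * pi * t)) ^ 2 = (2 * sin (pi * t)) ^ 2"
    using norm_one_minus_cis_double_sq[of 1 "pi * t"] by (simp add: power_mult_distrib mult.assoc)
  hence "norm (1 - complex_of_real 1 * cis (2 * pi * t)) = 2 * sin (pi * t)"
    using sin_pos by (subst (asm) power2_eq_iff_nonneg) auto
  moreover have "((\<lambda>x. norm (1 - complex_of_real (r x) * cis (2 * pi * t)))
                   \<longlongrightarrow> norm (1 - complex_of_real 1 * cis (2 * pi * t))) F"
    by (intro tendsto_intros assms(3))
  ultimately show ?thesis
    unfolding abel_log_sine_def using sin_pos by (intro tendsto_ln) auto
qed

lemma abs_abel_log_sine_le: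
  assumes "1 / 2 \<le> r" "r \<le> 1" "0 < t" "t < 1"
  shows "\<bar>abel_log_sine r t\<bar> \<le> ln 2 - ln (sin (pi * t))"
proof -
  define z where "z = norm (1 - complex_of_real r * cis (2 * pi * t))"
  have sin_pos: "0 < sin (pi * t)"
    using assms by (intro sin_gt_zero) auto
  have "z ^ 2 = (1 - r) ^ 2 + 4 * r * sin (pi * t) ^ 2"
    using norm_one_minus_cis_double_sq[of r "pi * t"] by (simp add: z_def mult.assoc)
  moreover have "sin (pi * t) ^ 2 * 1 \<le> sin (pi * t) ^ 2 * (4 * r)"
    using assms by (intro mult_left_mono) auto
  ultimately have "sin (pi * t) ^ 2 \<le> z ^ 2"
    by (simp add: algebra_simps add_increasing)
  hence "sin (pi * t) \<le> z"
    by (rule power2_le_imp_le) (simp add: z_def)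
  moreover have "z \<le> 2"
    unfolding z_def using norm_triangle_ineq4[of 1 "complex_of_real r * cis (2 * pi * t)"] assms
    by (simp add: norm_mult)
  ultimately have "ln (sin (pi * t)) \<le> ln z" "ln z \<le> ln 2" "ln (sin (pi * t)) \<le> 0"
    using sin_pos by simp_all
  moreover have "0 \<le> ln (2 :: real)"
    by simp
  ultimately show ?thesis
    unfolding abel_log_sine_def z_def[symmetric] abs_le_iff by linarith
qed

lemma integral_abel_log_sine_tendsto:
  assumes "r \<longlonglongrightarrow> 1" and r: "\<And>N. 1 / 2 \<le> r N" "\<And>N. r N < 1"
  shows "(\<lambda>N. integral {0..1} (\<lambda>t. t ^ b * abel_log_sine (r N) t))
           \<longlonglongrightarrow> integral {0..1} (\<lambda>t. t ^ b * ln (2 * sin (pi * t)))"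
proof -
  define f where "f N t = t ^ b * abel_log_sine (r N) t" for N t
  have f_int: "f N integrable_on {0<..<1}" for N
    using abel_log_sine_moment_sums(1)[of "r N" b] r[of N]
    by (simp add: f_def[abs_def] integrable_on_open_interval_real)
  have dominating: "(\<lambda>t. ln 2 - ln (sin (pi * t))) integrable_on {0<..<1}"
    unfolding integrable_on_open_interval_real
    by (intro integrable_diff integrable_const_ivl integrable_ln_sin_pi)
  have f_bound: "norm (f N t) \<le> ln 2 - ln (sin (pi * t))" if "t \<in> {0<..<1}" for N t
  proof -
    have "\<bar>t ^ b\<bar> * \<bar>abel_log_sine (r N) t\<bar> \<le> 1 * (ln 2 - ln (sin (pi * t)))"
      using that r[of N] by (intro mult_mono abs_abel_log_sine_le) (auto simp: power_le_one)
    thus ?thesis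
      by (simp add: f_def abs_mult)
  qed
  have f_lim: "(\<lambda>N. f N t) \<longlonglongrightarrow> t ^ b * ln (2 * sin (pi * t))" if "t \<in> {0<..<1}" for t
    unfolding f_def using that \<open>r \<longlonglongrightarrow> 1\<close> by (intro tendsto_mult_left abel_log_sine_tendsto) auto
  from dominated_convergence(2)[OF f_int dominating f_bound f_lim] show ?thesis
    by (simp add: f_def[abs_def] integral_open_interval_real)
qed

text \<open>Let \<open>r \<rightarrow> 1\<close> in \<open>abel_log_sine_moment_sums\<close>, using Abel's theorem on the side of the
  series.\<close>
lemma integral_power_ln_2sin_series:
  "integral {0..1} (\<lambda>t. t ^ b * ln (2 * sin (pi * t))) =
     - (\<Sum>k. cos_moment b (2 * pi * real (Suc k)) / real (Suc k))"
proof -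
  define r where "r N = 1 - 1 / (real N + 2)" for N
  have r: "1 / 2 \<le> r N" "r N < 1" for N
    by (auto simp: r_def field_simps)
  have "r \<longlonglongrightarrow> 1"
    unfolding r_def by real_asymp
  define a where "a k = cos_moment b (2 * pi * real (Suc k)) / real (Suc k)" for k
  have "integral {0..1} (\<lambda>t. t ^ b * abel_log_sine (r N) t) = - (\<Sum>k. r N ^ Suc k * a k)" for N
    using sums_unique[OF abel_log_sine_moment_sums(2)[of "r N" b]] r[of N] by (simp add: a_def)
  moreover have "(\<lambda>N. \<Sum>k. r N ^ Suc k * a k) \<longlonglongrightarrow> (\<Sum>k. a k)"
  proof (rule abel_limit_abs_summable)
    show "r N \<in> {0..1}" for N
      using r[of N] by simp
  qed (use \<open>r \<longlonglongrightarrow> 1\<close> cos_moment_series(2) in \<open>simp_all add: a_def\<close>)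
  ultimately have "(\<lambda>N. integral {0..1} (\<lambda>t. t ^ b * abel_log_sine (r N) t)) \<longlonglongrightarrow> - (\<Sum>k. a k)"
    by (simp add: tendsto_minus)
  with integral_abel_log_sine_tendsto[OF \<open>r \<longlonglongrightarrow> 1\<close> r]
  have "integral {0..1} (\<lambda>t. t ^ b * ln (2 * sin (pi * t))) = - (\<Sum>k. a k)"
    by (rule LIMSEQ_unique)
  thus ?thesis
    by (simp add: a_def)
qed

section \<open>The closed form\<close>

definition odd_zeta_sum :: "nat \<Rightarrow> nat \<Rightarrow> real" where
  "odd_zeta_sum a J = (\<Sum>j = 1..J. (-1) ^ j * zeta (2 * real j + 1) / (fact (a - 2 * j) * (2 * pi) ^ (2 * j)))"

lemma integral_power_ln_2sin:
  "integral {0..1} (\<lambda>t. t ^ b * ln (2 * sin (pi * t))) = fact b * odd_zeta_sum (Suc b) (b div 2)"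
proof -
  have "integral {0..1} (\<lambda>t. t ^ b * ln (2 * sin (pi * t))) =
          - (\<Sum>j = 1..b div 2. (-1) ^ (j - 1) * fact b / (fact (b + 1 - 2 * j) * (2 * pi) ^ (2 * j))
                                 * zeta (real (2 * j + 1)))"
    unfolding integral_power_ln_2sin_series using sums_unique[OF cos_moment_series(1)] by simp
  also have "\<dots> = fact b * odd_zeta_sum (Suc b) (b div 2)"
    unfolding odd_zeta_sum_def sum_distrib_left sum_negf[symmetric]
  proof (rule sum.cong[OF refl])
    fix j assume "j \<in> {1..b div 2}"
    hence "(-1) ^ j = - ((-1) ^ (j - 1) :: real)"
      by (cases j) auto
    thus "- ((-1) ^ (j - 1) * fact b / (fact (b + 1 - 2 * j) * (2 * pi) ^ (2 * j)) * zeta (real (2 * j + 1))) =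
          fact b * ((-1) ^ j * zeta (2 * real j + 1) / (fact (Suc b - 2 * j) * (2 * pi) ^ (2 * j)))"
      by (simp add: add.commute)
  qed
  finally show ?thesis .
qed

lemma zeta_even_series_closed_form:
  assumes "0 < a"
  shows "(\<lambda>k. zeta (2 * real (Suc k)) / (real (Suc k) * (2 * real (Suc k) + real a))) sums
           (ln (2 * pi) / real a - 1 / real a ^ 2 - fact (a - 1) * odd_zeta_sum a ((a - 1) div 2))"
proof -
  obtain b where a: "a = Suc b"
    using assms by (cases a) auto
  define g where "g t = t ^ b * (ln (pi * t) - ln (sin (pi * t)))" for t :: real
  have "((\<lambda>t. ln (2 * pi) * t ^ b + t ^ b * ln t - g t)
          has_integral ln (2 * pi) * (1 / real (Suc b)) + - 1 / real (Suc b) ^ 2 - integral {0..1} g) {0..1}"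
    unfolding g_def[abs_def]
    by (intro has_integral_diff has_integral_add has_integral_mult_right has_integral_power_01
        has_integral_power_ln_01 integrable_integral zeta_even_series_integral(1))
  moreover have "ln (2 * pi) * t ^ b + t ^ b * ln t - g t = t ^ b * ln (2 * sin (pi * t))" if "t \<in> {0<..<1}" for t
  proof -
    have "0 < sin (pi * t)"
      using that by (intro sin_gt_zero) auto
    thus ?thesis
      using that by (simp add: g_def ln_mult algebra_simps)
  qed
  ultimately have "((\<lambda>t. t ^ b * ln (2 * sin (pi * t)))
          has_integral ln (2 * pi) * (1 / real (Suc b)) + - 1 / real (Suc b) ^ 2 - integral {0..1} g) {0..1}"
    unfolding has_integral_Icc_iff_Ioo by (rule has_integral_eq[rotated])
  hence "integral {0..1} (\<lambda>t. t ^ b * ln (2 * sin (pi * t))) =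
          ln (2 * pi) * (1 / real (Suc b)) + - 1 / real (Suc b) ^ 2 - integral {0..1} g"
    by (rule integral_unique)
  hence "integral {0..1} g = ln (2 * pi) / real (Suc b) - 1 / real (Suc b) ^ 2 - fact b * odd_zeta_sum (Suc b) (b div 2)"
    unfolding integral_power_ln_2sin by simp
  with zeta_even_series_integral(2)[of b] show ?thesis
    by (simp add: a g_def[abs_def])
qed

lemma partial_fraction_sums:
  fixes z K :: "nat \<Rightarrow> real" and a b :: real
  assumes "(\<lambda>k. z k / (K k * (2 * K k + a))) sums A" "(\<lambda>k. z k / (K k * (2 * K k + b))) sums B"
    and "a \<noteq> b" "\<And>k. 0 < K k" "0 \<le> a" "0 \<le> b"
  shows "(\<lambda>k. z k / (K k * (2 * K k + a) * (2 * K k + b))) sums ((B - A) / (a - b))"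
proof -
  have "(\<lambda>k. (z k / (K k * (2 * K k + b)) - z k / (K k * (2 * K k + a))) / (a - b)) sums ((B - A) / (a - b))"
    using assms by (intro sums_divide sums_diff)
  moreover have "(z k / (K k * (2 * K k + b)) - z k / (K k * (2 * K k + a))) / (a - b) =
                   z k / (K k * (2 * K k + a) * (2 * K k + b))" for k
  proof -
    have "z k / (K k * B) - z k / (K k * A) = z k * (A - B) / (K k * A * B)" if "A \<noteq> 0" "B \<noteq> 0" for A B
      using that assms(4)[of k] by (simp add: field_simps)
    moreover have "2 * K k + a \<noteq> 0" "2 * K k + b \<noteq> 0"
      using assms(4)[of k] assms(5,6) by linarith+
    ultimately show ?thesis
      using \<open>a \<noteq> b\<close> by simp
  qed
  ultimately show ?thesis
    by simp
qed

lemma odd_zeta_sum_even: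
  assumes "even m" "0 < m"
  shows "odd_zeta_sum m (m div 2) =
           odd_zeta_sum m ((m - 1) div 2) + (-1) ^ (m div 2) * (zeta (real m + 1) / (2 * pi) ^ m)"
proof -
  obtain q where "m = 2 * q"
    using assms(1) by (rule evenE)
  with assms(2) obtain p where p: "m = 2 * Suc p"
    by (cases q) auto
  hence "m div 2 = Suc p" "(m - 1) div 2 = p" "m - 2 * Suc p = 0" "2 * real (Suc p) + 1 = real m + 1"
    by simp_all
  thus ?thesis
    unfolding odd_zeta_sum_def by (simp add: p)
qed

text \<open>With \<open>s = \<i>\<^sup>m\<close>, \<open>A = (m - 1)!\<close> and \<open>z = \<zeta>(m + 1) / (2\<pi>)\<^sup>m\<close> the term \<open>s A z\<close> is
  added and subtracted; it completes \<open>T\<close> to the sum up to \<open>m / 2\<close> (\<open>odd_zeta_sum_even\<close>).\<close>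
lemma closed_form_difference_quotient:
  fixes M N L A B T S s z :: real
  assumes "M \<noteq> N" "M \<noteq> 0" "N \<noteq> 0"
  shows "((L / N - 1 / N\<^sup>2 - B * S) - (L / M - 1 / M\<^sup>2 - A * T)) / (M - N) =
         - ((M + N) / (M * N)\<^sup>2) + L / (M * N) - s * A / (M - N) * z
         + 1 / (M - N) * (A * (T + s * z) - B * S)"
proof -
  have "M - N \<noteq> 0"
    using assms by simp
  thus ?thesis
    using assms by (simp add: divide_simps power2_eq_square) (simp add: algebra_simps)
qed

theorem corollary22:
  fixes m n :: nat
  assumes "m > 0" "even m" "n > 0" "odd n"
  shows "(\<lambda>k. let k' = real (Suc k) in complex_of_real (zeta (2 * k') /
              (k' * (2 * k' + real m) * (2 * k' + real n))))
         sums
         (- complex_of_real ((real m + real n) / (real m * real n)^2)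
          + complex_of_real (ln (2 * pi) / (real m * real n))
          - \<i> ^ m * of_nat (fact (m - 1)) / (of_nat m - of_nat n)
              * complex_of_real (zeta (real m + 1) / (2 * pi) ^ m)
          + 1 / (of_nat m - of_nat n) *
              complex_of_real (
                 fact (m - 1) * (\<Sum>j = 1..m div 2. (-1) ^ j * zeta (2 * real j + 1)
                                     / (fact (m - 2 * j) * (2 * pi) ^ (2 * j)))
               - fact (n - 1) * (\<Sum>j = 1..(n - 1) div 2. (-1) ^ j * zeta (2 * real j + 1)
                                     / (fact (n - 2 * j) * (2 * pi) ^ (2 * j)))))"
proof -
  define F where
    "F a = ln (2 * pi) / real a - 1 / real a ^ 2 - fact (a - 1) * odd_zeta_sum a ((a - 1) div 2)" for a
  have "real m \<noteq> real n"
    using assms by auto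
  hence "(\<lambda>k. zeta (2 * real (Suc k)) /
             (real (Suc k) * (2 * real (Suc k) + real m) * (2 * real (Suc k) + real n)))
           sums ((F n - F m) / (real m - real n))"
    using assms unfolding F_def by (intro partial_fraction_sums zeta_even_series_closed_form) auto
  hence "(\<lambda>k. let k' = real (Suc k) in
             complex_of_real (zeta (2 * k') / (k' * (2 * k' + real m) * (2 * k' + real n))))
           sums complex_of_real ((F n - F m) / (real m - real n))"
    unfolding Let_def by (rule sums_of_real)
  moreover have "(F n - F m) / (real m - real n) =
      - ((real m + real n) / (real m * real n)\<^sup>2) + ln (2 * pi) / (real m * real n)
      - (-1) ^ (m div 2) * fact (m - 1) / (real m - real n) * (zeta (real m + 1) / (2 * pi) ^ m)
      + 1 / (real m - real n) *
          (fact (m - 1) * odd_zeta_sum m (m div 2) - fact (n - 1) * odd_zeta_sum n ((n - 1) div 2))"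
    unfolding F_def odd_zeta_sum_even[OF assms(2,1)]
    by (rule closed_form_difference_quotient) (use \<open>real m \<noteq> real n\<close> assms in auto)
  moreover have "\<i> ^ m = (-1) ^ (m div 2)"
    using \<open>even m\<close> by (auto elim!: evenE simp: power_mult)
  ultimately show ?thesis
    by (simp add: odd_zeta_sum_def)
qed

end
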